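(* Let $\mathcal{M}=\langle S,\iota,\mathsf{Act},P,\mathsf{Z},\mathsf{obs}\rangle$ be an MDP. For every trace $\tau\in\mathsf{Z}^+$, the set $V(\mathsf{est}_{\mathsf{MDP}}(\tau))$ is finite.
   Context: An MDP is a tuple $\langle S,\iota,\mathsf{Act},P,\mathsf{Z},\mathsf{obs}\rangle$: finite state set $S$, initial distribution $\iota\in\mathsf{Distr}(S)$, finite action set $\mathsf{Act}$, partial transition function $P\colon S\times\mathsf{Act}\rightharpoonup\mathsf{Distr}(S)$ (write $P(s,\alpha,s')=P(s,\alpha)(s')$), finite observation set $\mathsf{Z}$, observation function $\mathsf{obs}\colon S\to\mathsf{Distr}(\mathsf{Z})$; $\mathsf{AvAct}(s)=\{\alpha\mid P(s,\alpha)\text{ defined}\}\neq\emptyset$. Beliefs: $\mathsf{Bel}=\mathsf{Distr}(S)\cup\{\mathbf{0}\}$, viewed as vectors in $\mathbb{R}^S$. $\mathsf{est}_{\mathsf{MDP}}\colon\mathsf{Z}^+\to2^{\mathsf{Bel}}$: $\mathsf{est}_{\mathsf{MDP}}(z)=\{b_z\}$ with $b_z(s)=\iota(s)\mathsf{obs}(s)(z)/\sum_{\hat s}\iota(\hat s)\mathsf{obs}(\hat s)(z)$ (or $\mathbf{0}$ if the denominator is $0$), and $\mathsf{est}_{\mathsf{MDP}}(\tau\cdot z)=\bigcup_{\mathsf{bel}\in\mathsf{est}_{\mathsf{MDP}}(\tau)}\mathsf{est}^{\mathsf{up}}(\mathsf{bel},z)$, where $\mathsf{bel}'\in\mathsf{est}^{\mathsf{up}}(\mathsf{bel},z)$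 iff there is $\varsigma\colon S\to\mathsf{Distr}(\mathsf{Act})$ with $\varsigma(s)$ supported in $\mathsf{AvAct}(s)$ and $\mathsf{bel}'(s')=\dfrac{\sum_s\mathsf{bel}(s)\sum_\alpha\varsigma(s)(\alpha)P(s,\alpha,s')\mathsf{obs}(s')(z)}{\sum_s\mathsf{bel}(s)\sum_\alpha\varsigma(s)(\alpha)\sum_{\hat s}P(s,\alpha,\hat s)\mathsf{obs}(\hat s)(z)}$ for all $s'$ ($0/0=0$). For $B\subseteq\mathsf{Bel}$, $V(B)$ is the set of elements of $B$ that are not convex combinations of other elements of $B$ (vertices of the convex hull of $B$). *)

theory Defs
  imports "HOL-Analysis.Analysis" "HOL-Probability.Probability_Mass_Function"
begin

text \<open>An MDP with finite state type 's, finite action type 'a and finite observation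
  type 'z is given by an initial distribution iota :: 's pmf, a partial transition
  function P :: 's => 'a => 's pmf option (None = undefined) and an observation
  function obs :: 's => 'z pmf.\<close>

definition AvAct :: "('s \<Rightarrow> 'a \<Rightarrow> 's pmf option) \<Rightarrow> 's \<Rightarrow> 'a set" where
  "AvAct P s = {\<alpha>. P s \<alpha> \<noteq> None}"

definition Ptr :: "('s \<Rightarrow> 'a \<Rightarrow> 's pmf option) \<Rightarrow> 's \<Rightarrow> 'a \<Rightarrow> 's \<Rightarrow> real" where
  "Ptr P s \<alpha> s' = (case P s \<alpha> of None \<Rightarrow> 0 | Some d \<Rightarrow> pmf d s')"

definition est_init :: "'s::finite pmf \<Rightarrow> ('s \<Rightarrow> 'z pmf) \<Rightarrow> 'z \<Rightarrow> real ^ 's" where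
  "est_init \<iota> obs z =
     (let d = (\<Sum>s\<in>UNIV. pmf \<iota> s * pmf (obs s) z)
      in if d = 0 then 0 else (\<chi> s. pmf \<iota> s * pmf (obs s) z / d))"

definition est_up :: "('s::finite \<Rightarrow> 'a::finite \<Rightarrow> 's pmf option) \<Rightarrow> ('s \<Rightarrow> 'z pmf)
    \<Rightarrow> real ^ 's \<Rightarrow> 'z \<Rightarrow> (real ^ 's) set" where
  "est_up P obs bel z =
     {bel'. \<exists>\<sigma> :: 's \<Rightarrow> 'a pmf. (\<forall>s. set_pmf (\<sigma> s) \<subseteq> AvAct P s) \<and>
        bel' = (\<chi> s'.
          (\<Sum>s\<in>UNIV. bel $ s * (\<Sum>\<alpha>\<in>UNIV. pmf (\<sigma> s) \<alpha> * Ptr P s \<alpha> s' * pmf (obs s') z))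
          / (\<Sum>s\<in>UNIV. bel $ s * (\<Sum>\<alpha>\<in>UNIV. pmf (\<sigma> s) \<alpha> *
                (\<Sum>t\<in>UNIV. Ptr P s \<alpha> t * pmf (obs t) z))))}"

text \<open>est_MDP on nonempty traces z0 z1 ... zn (the first observation is the initial one);
  division by zero yields 0 in Isabelle, matching the convention 0/0 = 0.\<close>
fun est_MDP :: "'s::finite pmf \<Rightarrow> ('s \<Rightarrow> 'a::finite \<Rightarrow> 's pmf option) \<Rightarrow> ('s \<Rightarrow> 'z pmf)
    \<Rightarrow> 'z list \<Rightarrow> (real ^ 's) set" where
  "est_MDP \<iota> P obs [] = {}"
| "est_MDP \<iota> P obs (z # zs) =
     foldl (\<lambda>B z. \<Union>bel\<in>B. est_up P obs bel z) {est_init \<iota> obs z} zs"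

definition V :: "('v::real_vector) set \<Rightarrow> 'v set" where
  "V B = {b \<in> B. b \<notin> convex hull (B - {b})}"

end

theory Submission
  imports Defs
begin

text \<open>One estimator step sends a belief to the normalisation of a vector that is linear in the
  belief and, through the product of the scheduler's action distributions, a convex combination
  of its values under the finitely many deterministic schedulers. Normalisation maps a convex
  combination of nonnegative vectors into the convex hull of their normalisations. Hence, by
  induction on the trace, each set of estimates lies in the convex hull of a finite subset of
  itself, and its vertices belong to that subset.\<close>

lemma sum_prod_marginal:
  fixes p :: "'x::finite \<Rightarrow> 'y::finite \<Rightarrow> 'c::comm_semiring_1"
  assumes "\<And>x. (\<Sum>y\<in>UNIV. p x y) = 1"
  shows "(\<Sum>f\<in>UNIV. (\<Prod>x\<in>UNIV. p x (f x)) * g (f x\<^sub>0)) = (\<Sum>y\<in>UNIV. p x\<^sub>0 y * g y)"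
proof -
  define q where "q x y = (if x = x\<^sub>0 then p x y * g y else p x y)" for x y
  have q_prod: "(\<Prod>x\<in>UNIV. q x (f x)) = (\<Prod>x\<in>UNIV. p x (f x)) * g (f x\<^sub>0)" for f :: "'x \<Rightarrow> 'y"
  proof -
    have "(\<Prod>x\<in>UNIV. q x (f x)) = q x\<^sub>0 (f x\<^sub>0) * (\<Prod>x\<in>UNIV - {x\<^sub>0}. q x (f x))"
      by (simp add: prod.remove[of UNIV x\<^sub>0])
    also have "\<dots> = p x\<^sub>0 (f x\<^sub>0) * g (f x\<^sub>0) * (\<Prod>x\<in>UNIV - {x\<^sub>0}. p x (f x))"
      by (simp add: q_def)
    also have "\<dots> = (\<Prod>x\<in>UNIV. p x (f x)) * g (f x\<^sub>0)"
      by (simp add: prod.remove[of UNIV x\<^sub>0] mult_ac)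
    finally show ?thesis .
  qed
  have "(\<Sum>f\<in>UNIV. \<Prod>x\<in>UNIV. q x (f x)) = (\<Prod>x\<in>UNIV. \<Sum>y\<in>UNIV. q x y)"
    using prod_sum_PiE[of UNIV "\<lambda>_. UNIV" q] by simp
  also have "\<dots> = (\<Sum>y\<in>UNIV. q x\<^sub>0 y) * (\<Prod>x\<in>UNIV - {x\<^sub>0}. \<Sum>y\<in>UNIV. q x y)"
    by (simp add: prod.remove)
  also have "(\<Prod>x\<in>UNIV - {x\<^sub>0}. \<Sum>y\<in>UNIV. q x y) = 1"
    by (rule prod.neutral) (simp add: q_def assms)
  finally have "(\<Sum>f\<in>UNIV. \<Prod>x\<in>UNIV. q x (f x)) = (\<Sum>y\<in>UNIV. q x\<^sub>0 y)"
    by simp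
  then show ?thesis
    unfolding q_prod by (simp add: q_def)
qed

definition mass :: "real ^ 'n \<Rightarrow> real" where
  "mass x = (\<Sum>i\<in>UNIV. x $ i)"

definition normalized :: "real ^ 'n \<Rightarrow> real ^ 'n" where
  "normalized x = inverse (mass x) *\<^sub>R x"

definition nonneg_vec :: "real ^ 'n \<Rightarrow> bool" where
  "nonneg_vec x \<longleftrightarrow> (\<forall>i. 0 \<le> x $ i)"

lemma mass_sum: "mass (\<Sum>j\<in>J. c j *\<^sub>R x j) = (\<Sum>j\<in>J. c j * mass (x j))"
  unfolding mass_def by (simp add: sum_component sum_distrib_left sum.swap[of _ UNIV])

lemma mass_nonneg: "nonneg_vec x \<Longrightarrow> 0 \<le> mass x"
  unfolding mass_def nonneg_vec_def by (simp add: sum_nonneg)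

lemma mass_eq_0_iff: "nonneg_vec x \<Longrightarrow> mass x = 0 \<longleftrightarrow> x = 0"
  unfolding mass_def nonneg_vec_def by (simp add: sum_nonneg_eq_0_iff vec_eq_iff)

lemma nonneg_vec_normalized: "nonneg_vec x \<Longrightarrow> nonneg_vec (normalized x)"
  using mass_nonneg[of x] unfolding normalized_def nonneg_vec_def by simp

lemma scaleR_mass_normalized: "nonneg_vec x \<Longrightarrow> mass x *\<^sub>R normalized x = x"
  unfolding normalized_def using mass_eq_0_iff by (cases "mass x = 0") auto

lemma normalized_convex_comb_in_convex_hull:
  fixes x :: "'j \<Rightarrow> real ^ 'n"
  assumes "finite J" and c_nonneg: "\<And>j. j \<in> J \<Longrightarrow> 0 \<le> c j" and c_sum: "sum c J = 1"
    and x_nonneg: "\<And>j. j \<in> J \<Longrightarrow> nonneg_vec (x j)"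
  shows "normalized (\<Sum>j\<in>J. c j *\<^sub>R x j) \<in> convex hull ((\<lambda>j. normalized (x j)) ` J)"
proof -
  have cm_nonneg: "0 \<le> c j * mass (x j)" if "j \<in> J" for j
    by (intro mult_nonneg_nonneg c_nonneg mass_nonneg x_nonneg that)
  show ?thesis
  proof (cases "mass (\<Sum>j\<in>J. c j *\<^sub>R x j) = 0")
    case True
    obtain j where j: "j \<in> J" "0 < c j"
      using c_nonneg c_sum by (metis leD less_eq_real_def sum_nonpos zero_less_one)
    have "(\<Sum>j\<in>J. c j * mass (x j)) = 0"
      using True by (simp add: mass_sum)
    then have "mass (x j) = 0"
      using j \<open>finite J\<close> cm_nonneg by (auto simp: sum_nonneg_eq_0_iff)
    then have "normalized (x j) = normalized (\<Sum>j\<in>J. c j *\<^sub>R x j)"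
      using True by (simp add: normalized_def)
    then show ?thesis
      using j by (metis hull_inc image_eqI)
  next
    case False
    define m where "m = mass (\<Sum>j\<in>J. c j *\<^sub>R x j)"
    have "normalized (\<Sum>j\<in>J. c j *\<^sub>R x j) =
        inverse m *\<^sub>R (\<Sum>j\<in>J. c j *\<^sub>R (mass (x j) *\<^sub>R normalized (x j)))"
      unfolding normalized_def[of "sum _ _"] m_def
      by (simp add: x_nonneg scaleR_mass_normalized cong: sum.cong)
    also have "\<dots> = (\<Sum>j\<in>J. (c j * mass (x j) / m) *\<^sub>R normalized (x j))"
      by (simp add: scaleR_sum_right divide_inverse mult_ac)
    also have "\<dots> \<in> convex hull ((\<lambda>j. normalized (x j)) ` J)"
    proof (rule convex_sum[OF \<open>finite J\<close> convex_convex_hull])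
      show "(\<Sum>j\<in>J. c j * mass (x j) / m) = 1"
        using False by (simp add: m_def mass_sum flip: sum_divide_distrib)
      show "0 \<le> c j * mass (x j) / m" if "j \<in> J" for j
        using that cm_nonneg by (simp add: m_def mass_sum sum_nonneg)
    qed (simp add: hull_inc)
    finally show ?thesis .
  qed
qed

definition unnorm_update :: "('s::finite \<Rightarrow> 'a::finite \<Rightarrow> 's pmf option) \<Rightarrow> ('s \<Rightarrow> 'z pmf) \<Rightarrow> 'z
    \<Rightarrow> ('s \<Rightarrow> 'a pmf) \<Rightarrow> real ^ 's \<Rightarrow> real ^ 's" where
  "unnorm_update P obs z \<sigma> bel =
     (\<chi> s'. \<Sum>s\<in>UNIV. bel $ s * (\<Sum>\<alpha>\<in>UNIV. pmf (\<sigma> s) \<alpha> * Ptr P s \<alpha> s' * pmf (obs s') z))"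

lemma mass_unnorm_update:
  "mass (unnorm_update P obs z \<sigma> bel) =
     (\<Sum>s\<in>UNIV. bel $ s * (\<Sum>\<alpha>\<in>UNIV. pmf (\<sigma> s) \<alpha> * (\<Sum>t\<in>UNIV. Ptr P s \<alpha> t * pmf (obs t) z)))"
proof -
  have "mass (unnorm_update P obs z \<sigma> bel) =
      (\<Sum>t\<in>UNIV. \<Sum>s\<in>UNIV. \<Sum>\<alpha>\<in>UNIV. bel $ s * (pmf (\<sigma> s) \<alpha> * (Ptr P s \<alpha> t * pmf (obs t) z)))"
    by (simp add: mass_def unnorm_update_def sum_distrib_left mult_ac)
  also have "\<dots> = (\<Sum>s\<in>UNIV. \<Sum>t\<in>UNIV. \<Sum>\<alpha>\<in>UNIV. bel $ s * (pmf (\<sigma> s) \<alpha> * (Ptr P s \<alpha> t * pmf (obs t) z)))"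
    by (rule sum.swap)
  also have "\<dots> = (\<Sum>s\<in>UNIV. \<Sum>\<alpha>\<in>UNIV. \<Sum>t\<in>UNIV. bel $ s * (pmf (\<sigma> s) \<alpha> * (Ptr P s \<alpha> t * pmf (obs t) z)))"
    by (rule sum.cong[OF refl], rule sum.swap)
  finally show ?thesis
    by (simp add: sum_distrib_left)
qed

lemma est_up_eq_normalized:
  "est_up P obs bel z =
     {normalized (unnorm_update P obs z \<sigma> bel) | \<sigma>. \<forall>s. set_pmf (\<sigma> s) \<subseteq> AvAct P s}"
  unfolding est_up_def normalized_def mass_unnorm_update
  by (auto simp: unnorm_update_def vec_eq_iff divide_inverse mult_ac)

lemma linear_unnorm_update: "linear (unnorm_update P obs z \<sigma>)"
  by (rule linearI)
    (simp_all add: unnorm_update_def vec_eq_iff algebra_simps sum.distrib sum_distrib_left)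

lemma nonneg_vec_unnorm_update: "nonneg_vec bel \<Longrightarrow> nonneg_vec (unnorm_update P obs z \<sigma> bel)"
  unfolding nonneg_vec_def unnorm_update_def Ptr_def
  by (auto intro!: sum_nonneg mult_nonneg_nonneg split: option.split)

lemma unnorm_update_return_pmf:
  "unnorm_update P obs z (\<lambda>s. return_pmf (d s)) bel =
     (\<chi> s'. \<Sum>s\<in>UNIV. bel $ s * (Ptr P s (d s) s' * pmf (obs s') z))"
  by (simp add: unnorm_update_def indicator_def mult.assoc if_distrib sum.delta cong: if_cong)

lemma unnorm_update_eq_sum_deterministic:
  fixes \<sigma> :: "'s::finite \<Rightarrow> 'a::finite pmf"
  shows "unnorm_update P obs z \<sigma> bel =
    (\<Sum>d\<in>UNIV. (\<Prod>s\<in>UNIV. pmf (\<sigma> s) (d s)) *\<^sub>R unnorm_update P obs z (\<lambda>s. return_pmf (d s)) bel)"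
proof -
  have marginal: "(\<Sum>\<alpha>\<in>UNIV. pmf (\<sigma> s) \<alpha> * g \<alpha>) =
      (\<Sum>d\<in>UNIV. (\<Prod>t\<in>UNIV. pmf (\<sigma> t) (d t)) * g (d s))" for s and g :: "'a \<Rightarrow> real"
    by (rule sum_prod_marginal[symmetric]) (simp add: sum_pmf_eq_1)
  have "unnorm_update P obs z \<sigma> bel $ s' =
      (\<Sum>d\<in>UNIV. (\<Prod>t\<in>UNIV. pmf (\<sigma> t) (d t)) * unnorm_update P obs z (\<lambda>s. return_pmf (d s)) bel $ s')"
    for s'
  proof -
    have "unnorm_update P obs z \<sigma> bel $ s' =
        (\<Sum>s\<in>UNIV. \<Sum>d\<in>UNIV. (\<Prod>t\<in>UNIV. pmf (\<sigma> t) (d t)) * (bel $ s * (Ptr P s (d s) s' * pmf (obs s') z)))"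
      by (simp add: unnorm_update_def mult.assoc marginal sum_distrib_left mult.left_commute)
    also have "\<dots> = (\<Sum>d\<in>UNIV. \<Sum>s\<in>UNIV. (\<Prod>t\<in>UNIV. pmf (\<sigma> t) (d t)) * (bel $ s * (Ptr P s (d s) s' * pmf (obs s') z)))"
      by (rule sum.swap)
    also have "\<dots> = (\<Sum>d\<in>UNIV. (\<Prod>t\<in>UNIV. pmf (\<sigma> t) (d t)) * unnorm_update P obs z (\<lambda>s. return_pmf (d s)) bel $ s')"
      by (simp add: unnorm_update_return_pmf sum_distrib_left)
    finally show ?thesis .
  qed
  then show ?thesis
    by (simp add: vec_eq_iff)
qed

lemma normalized_unnorm_update_in_convex_hull:
  fixes F :: "(real ^ 's::finite) set" and \<sigma> :: "'s \<Rightarrow> 'a::finite pmf"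
  assumes "finite F" and F_nonneg: "\<And>f. f \<in> F \<Longrightarrow> nonneg_vec f" and "bel \<in> convex hull F"
    and \<sigma>: "\<forall>s. set_pmf (\<sigma> s) \<subseteq> AvAct P s"
  shows "normalized (unnorm_update P obs z \<sigma> bel) \<in> convex hull
    ((\<lambda>(f, d). normalized (unnorm_update P obs z (\<lambda>s. return_pmf (d s)) f))
       ` (F \<times> {d. \<forall>s. d s \<in> AvAct P s}))" (is "_ \<in> convex hull (?det ` (F \<times> ?D))")
proof -
  define W where "W d = (\<Prod>s\<in>UNIV. pmf (\<sigma> s) (d s))" for d :: "'s \<Rightarrow> 'a"
  have W_nonneg: "0 \<le> W d" for d
    unfolding W_def by (simp add: prod_nonneg)
  have W_outside: "W d = 0" if d: "d \<notin> ?D" for d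
  proof -
    obtain s where "d s \<notin> AvAct P s"
      using d by blast
    then have "pmf (\<sigma> s) (d s) = 0"
      using \<sigma> by (meson set_pmf_iff subsetD)
    then show ?thesis
      unfolding W_def by (auto simp: prod_zero_iff)
  qed
  have "sum W UNIV = 1"
    using sum_prod_marginal[of "\<lambda>s \<alpha>. pmf (\<sigma> s) \<alpha>" "\<lambda>_. 1"] by (simp add: W_def sum_pmf_eq_1)
  then have W_sum: "sum W ?D = 1"
    using sum.mono_neutral_left[of UNIV ?D W] W_outside by simp
  have deterministic: "normalized (unnorm_update P obs z \<sigma> f) \<in> convex hull (?det ` (F \<times> ?D))"
    if "f \<in> F" for f
  proof -
    have "unnorm_update P obs z \<sigma> f =
        (\<Sum>d\<in>?D. W d *\<^sub>R unnorm_update P obs z (\<lambda>s. return_pmf (d s)) f)"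
      unfolding unnorm_update_eq_sum_deterministic[of P obs z \<sigma>] W_def[symmetric]
      by (rule sum.mono_neutral_right) (auto simp: W_outside)
    then have "normalized (unnorm_update P obs z \<sigma> f) \<in> convex hull ((\<lambda>d. ?det (f, d)) ` ?D)"
      using that F_nonneg
      by (simp add: normalized_convex_comb_in_convex_hull W_nonneg W_sum nonneg_vec_unnorm_update)
    also have "\<dots> \<subseteq> convex hull (?det ` (F \<times> ?D))"
      using that by (intro hull_mono) auto
    finally show ?thesis .
  qed
  obtain \<mu> where "\<And>f. f \<in> F \<Longrightarrow> 0 \<le> \<mu> f" "sum \<mu> F = 1" "bel = (\<Sum>f\<in>F. \<mu> f *\<^sub>R f)"
    using \<open>bel \<in> convex hull F\<close> convex_hull_finite[OF \<open>finite F\<close>] by auto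
  then have "normalized (unnorm_update P obs z \<sigma> bel) \<in>
      convex hull ((\<lambda>f. normalized (unnorm_update P obs z \<sigma> f)) ` F)"
    using \<open>finite F\<close> F_nonneg
    by (simp add: linear_sum[OF linear_unnorm_update] linear_scale[OF linear_unnorm_update]
        normalized_convex_comb_in_convex_hull nonneg_vec_unnorm_update)
  also have "\<dots> \<subseteq> convex hull (?det ` (F \<times> ?D))"
    using deterministic by (intro convex_hull_subset) auto
  finally show ?thesis .
qed

lemma V_subset_if_convex_hull:
  assumes "F \<subseteq> B" and "B \<subseteq> convex hull F"
  shows "V B \<subseteq> F"
proof
  fix b assume "b \<in> V B"
  show "b \<in> F"
  proof (rule ccontr)
    assume "b \<notin> F"
    with assms have "B \<subseteq> convex hull (B - {b})"
      by (metis Diff_empty hull_mono insert_subset subset_Diff_insert subset_trans)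
    with \<open>b \<in> V B\<close> show False
      unfolding V_def by blast
  qed
qed

definition has_finite_nonneg_frame :: "(real ^ 'n) set \<Rightarrow> bool" where
  "has_finite_nonneg_frame B \<longleftrightarrow>
     (\<exists>F. finite F \<and> F \<subseteq> B \<and> B \<subseteq> convex hull F \<and> (\<forall>f\<in>F. nonneg_vec f))"

lemma finite_V_if_finite_nonneg_frame: "has_finite_nonneg_frame B \<Longrightarrow> finite (V B)"
  unfolding has_finite_nonneg_frame_def using V_subset_if_convex_hull finite_subset by metis

lemma has_finite_nonneg_frame_est_init: "has_finite_nonneg_frame {est_init \<iota> obs z}"
proof -
  have "nonneg_vec (est_init \<iota> obs z)"
    unfolding nonneg_vec_def est_init_def Let_def by (simp add: sum_nonneg)
  then show ?thesis
    unfolding has_finite_nonneg_frame_def by (intro exI[of _ "{est_init \<iota> obs z}"]) (simp add: hull_inc)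
qed

lemma has_finite_nonneg_frame_est_up:
  fixes P :: "'s::finite \<Rightarrow> 'a::finite \<Rightarrow> 's pmf option"
  assumes "has_finite_nonneg_frame B"
  shows "has_finite_nonneg_frame (\<Union>bel\<in>B. est_up P obs bel z)"
proof -
  obtain F where F: "finite F" "F \<subseteq> B" "B \<subseteq> convex hull F" "\<And>f. f \<in> F \<Longrightarrow> nonneg_vec f"
    using assms unfolding has_finite_nonneg_frame_def by blast
  define F' where "F' = (\<lambda>(f, d). normalized (unnorm_update P obs z (\<lambda>s. return_pmf (d s)) f))
    ` (F \<times> {d. \<forall>s. d s \<in> AvAct P s})"
  have "finite F'"
    unfolding F'_def using F(1) by simp
  moreover have "F' \<subseteq> (\<Union>bel\<in>B. est_up P obs bel z)"
  proof
    fix x assume "x \<in> F'"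
    then obtain f d where "f \<in> F" and d: "\<forall>s. d s \<in> AvAct P s"
      and x: "x = normalized (unnorm_update P obs z (\<lambda>s. return_pmf (d s)) f)"
      unfolding F'_def by auto
    have "x \<in> est_up P obs f z"
      unfolding est_up_eq_normalized x using d by (intro CollectI exI[of _ "\<lambda>s. return_pmf (d s)"]) simp
    then show "x \<in> (\<Union>bel\<in>B. est_up P obs bel z)"
      using \<open>f \<in> F\<close> F(2) by blast
  qed
  moreover have "(\<Union>bel\<in>B. est_up P obs bel z) \<subseteq> convex hull F'"
  proof
    fix x assume "x \<in> (\<Union>bel\<in>B. est_up P obs bel z)"
    then obtain bel \<sigma> where "bel \<in> B" and \<sigma>: "\<forall>s. set_pmf (\<sigma> s) \<subseteq> AvAct P s"
      and x: "x = normalized (unnorm_update P obs z \<sigma> bel)"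
      unfolding est_up_eq_normalized by blast
    show "x \<in> convex hull F'"
      unfolding x F'_def
      by (rule normalized_unnorm_update_in_convex_hull) (use F \<sigma> \<open>bel \<in> B\<close> in auto)
  qed
  moreover have "\<forall>f\<in>F'. nonneg_vec f"
    unfolding F'_def using F(4) by (auto intro!: nonneg_vec_normalized nonneg_vec_unnorm_update)
  ultimately show ?thesis
    unfolding has_finite_nonneg_frame_def by blast
qed

theorem lemma5:
  fixes \<iota> :: "'s::finite pmf"
    and P :: "'s \<Rightarrow> 'a::finite \<Rightarrow> 's pmf option"
    and obs :: "'s \<Rightarrow> 'z::finite pmf"
    and \<tau> :: "'z list"
  assumes "\<forall>s. AvAct P s \<noteq> {}"
    and "\<tau> \<noteq> []"
  shows "finite (V (est_MDP \<iota> P obs \<tau>))"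
proof -
  obtain z zs where \<tau>: "\<tau> = z # zs"
    using \<open>\<tau> \<noteq> []\<close> by (cases \<tau>) auto
  have "has_finite_nonneg_frame (foldl (\<lambda>B z. \<Union>bel\<in>B. est_up P obs bel z) B zs)"
    if "has_finite_nonneg_frame B" for B
    using that by (induction zs arbitrary: B) (simp_all add: has_finite_nonneg_frame_est_up)
  then show ?thesis
    unfolding \<tau> by (simp add: has_finite_nonneg_frame_est_init finite_V_if_finite_nonneg_frame)
qed

end
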